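(* Let $X_0,X_1,X_2,\dots$ be i.i.d. complex-valued random variables with ${\bf E}[X_i]=0$, ${\bf E}|X_i|^2=1$, ${\bf E}\big[(\mathrm{Re}\,X_i)^2\big]={\bf E}\big[(\mathrm{Im}\,X_i)^2\big]$ and ${\bf E}\big[\mathrm{Re}(X_i)\,\mathrm{Im}(X_i)\big]=0$. Let $Y_0,Y_1,\dots$ be i.i.d. complex Gaussian random variables, each with density $\pi^{-1}e^{-|y|^2}$ on $\mathbb{C}$. For a sequence $\boldsymbol{x}=(x_0,x_1,\dots)$ write $f(\boldsymbol{x},z)=\sum_{k=0}^\infty x_k z^k$. For $u,z$ in the open unit disk $U(0,1)=\{z\in\mathbb{C}:|z|<1\}$ let $$\Phi(u;z)=\frac{z-u}{1-\overline{u}z},\qquad \Delta(u,z)=\frac{1-\overline{u}z}{\sqrt{1-|u|^2}}.$$ Then for every $n\in\mathbb{N}$, all $z_1,\dots,z_n\in U(0,1)$ and all $\lambda_1,\dots,\lambda_n\in\mathbb{C}$, $$\mathrm{Re}\left[\sum_{i=1}^n\lambda_i\,\frac{f(\boldsymbol{X},\Phi(u;z_i))}{\Delta(u,z_i)}\right]\ \Longrightarrow\ \mathrm{Re}\left[\sum_{i=1}^n\lambda_i\, f(\boldsymbol{Y},z_i)\right]\quad\text{as } |u|\uparrow 1,$$ where $\Longrightarrow$ denotes convergence in distribution.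
   Context: The limit $|u|\uparrow 1$ means $u\in U(0,1)$ with $|u|\to1$ in any manner. The series defining $f(\boldsymbol{X},\cdot)$ and $f(\boldsymbol{Y},\cdot)$ converge almost surely on $U(0,1)$. *)

theory Defs
  imports "HOL-Probability.Probability"
begin

definition rps :: "(nat \<Rightarrow> complex) \<Rightarrow> complex \<Rightarrow> complex" where
  "rps x z = (\<Sum>k. x k * z ^ k)"

definition Phi :: "complex \<Rightarrow> complex \<Rightarrow> complex" where
  "Phi u z = (z - u) / (1 - cnj u * z)"

definition Delta :: "complex \<Rightarrow> complex \<Rightarrow> complex" where
  "Delta u z = (1 - cnj u * z) / complex_of_real (sqrt (1 - (cmod u)\<^sup>2))"

end

theory Submission
  imports Defs
begin

text \<open>
  With \<open>\<alpha>\<^sub>k = \<Sum>\<^sub>i \<lambda>\<^sub>i \<Phi>(u;z\<^sub>i)\<^sup>k / \<Delta>(u,z\<^sub>i)\<close>, the statistic is the almost sure limit of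
  \<open>\<Sum>\<^sub>k Re (\<alpha>\<^sub>k X\<^sub>k)\<close>, a series of independent terms, so its characteristic function is the
  infinite product of those of the \<open>Re (\<alpha>\<^sub>k X\<^sub>0)\<close>. The identity
  \<open>\<Delta>(u,z) \<Delta>(u,w)\<^sup>* (1 - \<Phi>(u;z) \<Phi>(u;w)\<^sup>*) = 1 - z w\<^sup>*\<close> makes
  \<open>K = \<Sum>\<^sub>k |\<alpha>\<^sub>k|\<^sup>2 = Re \<Sum>\<^sub>i\<^sub>j \<lambda>\<^sub>i \<lambda>\<^sub>j\<^sup>* / (1 - z\<^sub>i z\<^sub>j\<^sup>*)\<close> independent of \<open>u\<close>, and the same
  computation for the Gaussian series gives the characteristic function \<open>exp (-t\<^sup>2 K / 4)\<close>.
  Since \<open>sup\<^sub>k |\<alpha>\<^sub>k| = O(\<surd>(1 - |u|\<^sup>2)) \<rightarrow> 0\<close>, a second order expansion of each factor shows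
  that the product tends to the same limit, and Levy's continuity theorem concludes.
\<close>

section \<open>The disc automorphisms \<open>Phi\<close> and the factors \<open>Delta\<close>\<close>

lemma one_minus_cnj_mult_neq_zero:
  assumes "cmod u < 1" "cmod z < 1"
  shows "1 - cnj u * z \<noteq> 0"
proof
  assume "1 - cnj u * z = 0"
  then have "cmod u * cmod z = 1" by (metis complex_mod_cnj eq_iff_diff_eq_0 norm_mult norm_one)
  moreover have "cmod u * cmod z < 1"
    using assms by (metis le_less_trans less_eq_real_def mult_left_le norm_ge_zero)
  ultimately show False by simp
qed

lemma one_minus_Phi_mult_cnj_Phi:
  assumes u: "cmod u < 1" and z: "cmod z < 1" and w: "cmod w < 1"
  shows "1 - Phi u z * cnj (Phi u w) =
    (1 - complex_of_real ((cmod u)\<^sup>2)) * (1 - z * cnj w) / ((1 - cnj u * z) * cnj (1 - cnj u * w))"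
proof -
  have nz: "1 - cnj u * z \<noteq> 0" by (rule one_minus_cnj_mult_neq_zero[OF u z])
  have nw: "1 - u * cnj w \<noteq> 0"
    using one_minus_cnj_mult_neq_zero[OF u w] by (metis complex_cnj_cnj complex_cnj_diff
        complex_cnj_mult complex_cnj_one complex_cnj_zero_iff)
  have "1 - Phi u z * cnj (Phi u w) = 1 - ((z - u) / (1 - cnj u * z)) * ((cnj w - cnj u) / (1 - u * cnj w))"
    by (simp add: Phi_def)
  also have "\<dots> = ((1 - cnj u * z) * (1 - u * cnj w) - (z - u) * (cnj w - cnj u))
      / ((1 - cnj u * z) * (1 - u * cnj w))"
  proof -
    have "1 - (a / p) * (b / q) = (p * q - a * b) / (p * q)" if "p \<noteq> 0" "q \<noteq> 0" for a b p q :: complex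
      using that by (simp add: field_simps)
    then show ?thesis using nz nw by blast
  qed
  also have "(1 - cnj u * z) * (1 - u * cnj w) - (z - u) * (cnj w - cnj u) = (1 - u * cnj u) * (1 - z * cnj w)"
    by (simp add: algebra_simps)
  finally show ?thesis unfolding complex_norm_square by simp
qed

lemma Delta_mult_cnj_Delta:
  assumes "cmod u < 1"
  shows "Delta u z * cnj (Delta u w) =
    (1 - cnj u * z) * cnj (1 - cnj u * w) / (1 - complex_of_real ((cmod u)\<^sup>2))"
proof -
  have pos: "0 < 1 - (cmod u)\<^sup>2" using assms by (simp add: abs_square_less_1)
  define s where "s = complex_of_real (sqrt (1 - (cmod u)\<^sup>2))"
  have "Delta u z * cnj (Delta u w) = (1 - cnj u * z) * cnj (1 - cnj u * w) / (s * s)"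
    unfolding Delta_def s_def by (simp only: complex_cnj_divide complex_cnj_complex_of_real) simp
  also have "s * s = 1 - complex_of_real ((cmod u)\<^sup>2)"
    unfolding s_def using pos
    by (simp only: of_real_mult[symmetric] real_sqrt_mult_self abs_of_pos[OF pos] of_real_diff of_real_1)
  finally show ?thesis .
qed

lemma Delta_mult_cnj_Delta_mult_kernel:
  assumes u: "cmod u < 1" and z: "cmod z < 1" and w: "cmod w < 1"
  shows "Delta u z * cnj (Delta u w) * (1 - Phi u z * cnj (Phi u w)) = 1 - z * cnj w"
proof -
  have "1 - complex_of_real ((cmod u)\<^sup>2) \<noteq> 0"
    using u by (metis abs_square_less_1 less_irrefl norm_ge_zero of_real_1 of_real_eq_iff
        abs_of_nonneg right_minus_eq)
  moreover have "1 - cnj u * z \<noteq> 0" by (rule one_minus_cnj_mult_neq_zero[OF u z])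
  moreover have "cnj (1 - cnj u * w) \<noteq> 0"
    using one_minus_cnj_mult_neq_zero[OF u w] by (metis complex_cnj_zero_iff)
  ultimately show ?thesis
    unfolding Delta_mult_cnj_Delta[OF u] one_minus_Phi_mult_cnj_Phi[OF u z w] by simp
qed

lemma kernel_divide_Delta_Phi:
  assumes "cmod u < 1" "cmod z < 1" "cmod w < 1"
  shows "(a / Delta u z) * cnj (b / Delta u w) / (1 - Phi u z * cnj (Phi u w)) = a * cnj b / (1 - z * cnj w)"
proof -
  have "(a / Delta u z) * cnj (b / Delta u w) / (1 - Phi u z * cnj (Phi u w)) =
      a * cnj b / (Delta u z * cnj (Delta u w) * (1 - Phi u z * cnj (Phi u w)))"
    by (simp add: field_simps)
  then show ?thesis unfolding Delta_mult_cnj_Delta_mult_kernel[OF assms] .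
qed

lemma norm_Phi_less_one:
  assumes u: "cmod u < 1" and z: "cmod z < 1"
  shows "cmod (Phi u z) < 1"
proof -
  define p where "p = 1 - cnj u * z"
  have "complex_of_real (1 - (cmod (Phi u z))\<^sup>2) = 1 - Phi u z * cnj (Phi u z)"
    by (simp only: of_real_diff of_real_1 complex_norm_square)
  also have "\<dots> = (1 - complex_of_real ((cmod u)\<^sup>2)) * (1 - z * cnj z) / (p * cnj p)"
    unfolding p_def by (rule one_minus_Phi_mult_cnj_Phi[OF u z z])
  also have "\<dots> = complex_of_real ((1 - (cmod u)\<^sup>2) * (1 - (cmod z)\<^sup>2) / (cmod p)\<^sup>2)"
    by (simp only: complex_norm_square[symmetric] of_real_diff of_real_1 of_real_mult of_real_divide)
  finally have "1 - (cmod (Phi u z))\<^sup>2 = (1 - (cmod u)\<^sup>2) * (1 - (cmod z)\<^sup>2) / (cmod p)\<^sup>2"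
    using of_real_eq_iff by blast
  moreover have "0 < (1 - (cmod u)\<^sup>2) * (1 - (cmod z)\<^sup>2) / (cmod p)\<^sup>2"
    using u z one_minus_cnj_mult_neq_zero[OF u z] unfolding p_def by (simp add: abs_square_less_1)
  ultimately have "(cmod (Phi u z))\<^sup>2 < 1" by linarith
  then show ?thesis by (simp add: abs_square_less_1)
qed

lemma norm_divide_Delta_le:
  assumes u: "cmod u < 1" and z: "cmod z < 1"
  shows "cmod (a / Delta u z) \<le> cmod a * sqrt (1 - (cmod u)\<^sup>2) / (1 - cmod z)"
proof -
  have pos: "0 < 1 - (cmod u)\<^sup>2" using u by (simp add: abs_square_less_1)
  have "1 - cmod z \<le> 1 - cmod (cnj u * z)" using u by (simp add: norm_mult mult_left_le_one_le)
  also have "\<dots> \<le> cmod (1 - cnj u * z)" using norm_triangle_ineq2[of 1 "cnj u * z"] by simp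
  finally have lb: "1 - cmod z \<le> cmod (1 - cnj u * z)" .
  have "cmod (a / Delta u z) = cmod a * sqrt (1 - (cmod u)\<^sup>2) / cmod (1 - cnj u * z)"
    unfolding Delta_def using pos by (simp add: norm_divide norm_mult)
  also have "\<dots> \<le> cmod a * sqrt (1 - (cmod u)\<^sup>2) / (1 - cmod z)"
    using pos z lb one_minus_cnj_mult_neq_zero[OF u z] by (intro divide_left_mono) simp_all
  finally show ?thesis .
qed

lemma sum_norm_divide_Delta_tendsto_0:
  fixes n :: nat and z lam u :: "nat \<Rightarrow> complex"
  assumes z: "\<And>i. i < n \<Longrightarrow> cmod (z i) < 1" and u: "\<And>m. cmod (u m) < 1"
    and u_lim: "(\<lambda>m. cmod (u m)) \<longlonglongrightarrow> 1"
  shows "(\<lambda>m. \<Sum>i<n. cmod (lam i / Delta (u m) (z i))) \<longlonglongrightarrow> 0"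
proof (rule tendsto_sandwich[OF _ _ tendsto_const])
  define C where "C = (\<Sum>i<n. cmod (lam i) / (1 - cmod (z i)))"
  have "(\<Sum>i<n. cmod (lam i / Delta (u m) (z i))) \<le> sqrt (1 - (cmod (u m))\<^sup>2) * C" for m
  proof -
    have "(\<Sum>i<n. cmod (lam i / Delta (u m) (z i)))
        \<le> (\<Sum>i<n. cmod (lam i) * sqrt (1 - (cmod (u m))\<^sup>2) / (1 - cmod (z i)))"
      using u z by (intro sum_mono norm_divide_Delta_le) simp_all
    then show ?thesis unfolding C_def by (simp add: sum_distrib_left ac_simps)
  qed
  then show "\<forall>\<^sub>F m in sequentially. (\<Sum>i<n. cmod (lam i / Delta (u m) (z i))) \<le> sqrt (1 - (cmod (u m))\<^sup>2) * C"
    by simp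
  have "(\<lambda>m. sqrt (1 - (cmod (u m))\<^sup>2) * C) \<longlonglongrightarrow> sqrt (1 - 1\<^sup>2) * C"
    by (intro tendsto_intros u_lim)
  then show "(\<lambda>m. sqrt (1 - (cmod (u m))\<^sup>2) * C) \<longlonglongrightarrow> 0" by simp
qed (simp add: sum_nonneg)

section \<open>Linear statistics of random power series\<close>

lemma AE_summable_ident_distr_power:
  fixes Z :: "nat \<Rightarrow> 'a \<Rightarrow> complex"
  assumes "prob_space M" and [measurable]: "\<And>k. Z k \<in> borel_measurable M"
    and ident: "\<And>k. distr M borel (Z k) = distr M borel (Z 0)"
    and int: "integrable M (\<lambda>\<omega>. cmod (Z 0 \<omega>))"
    and r: "0 \<le> r" "r < 1"
  shows "AE \<omega> in M. summable (\<lambda>k. cmod (Z k \<omega>) * r ^ k)"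
proof -
  define C where "C = (\<integral>\<^sup>+\<omega>. ennreal (cmod (Z 0 \<omega>)) \<partial>M)"
  have C_finite: "C < \<infinity>" using int unfolding C_def integrable_iff_bounded by simp
  have C_eq: "(\<integral>\<^sup>+\<omega>. ennreal (cmod (Z k \<omega>)) \<partial>M) = C" for k
  proof -
    have "(\<integral>\<^sup>+\<omega>. ennreal (cmod (Z k \<omega>)) \<partial>M) = (\<integral>\<^sup>+x. ennreal (cmod x) \<partial>distr M borel (Z k))"
      by (simp add: nn_integral_distr)
    also have "\<dots> = (\<integral>\<^sup>+x. ennreal (cmod x) \<partial>distr M borel (Z 0))" by (subst ident) (rule refl)
    also have "\<dots> = C" unfolding C_def by (simp add: nn_integral_distr)
    finally show ?thesis .
  qed
  have "(\<integral>\<^sup>+\<omega>. (\<Sum>k. ennreal (cmod (Z k \<omega>) * r ^ k)) \<partial>M)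
      = (\<Sum>k. \<integral>\<^sup>+\<omega>. ennreal (cmod (Z k \<omega>) * r ^ k) \<partial>M)"
    by (rule nn_integral_suminf) simp
  also have "\<dots> = (\<Sum>k. ennreal (r ^ k) * C)"
  proof (rule suminf_cong)
    fix k
    have "(\<integral>\<^sup>+\<omega>. ennreal (cmod (Z k \<omega>) * r ^ k) \<partial>M) = (\<integral>\<^sup>+\<omega>. ennreal (r ^ k) * ennreal (cmod (Z k \<omega>)) \<partial>M)"
      using r by (intro nn_integral_cong) (simp add: ennreal_mult' mult.commute)
    then show "(\<integral>\<^sup>+\<omega>. ennreal (cmod (Z k \<omega>) * r ^ k) \<partial>M) = ennreal (r ^ k) * C"
      by (simp add: nn_integral_cmult C_eq)
  qed
  also have "\<dots> = (\<Sum>k. ennreal (r ^ k)) * C" by (rule ennreal_suminf_multc)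
  also have "(\<Sum>k. ennreal (r ^ k)) = ennreal (1 / (1 - r))"
    using r by (intro suminf_ennreal_eq geometric_sums) simp_all
  finally have "(\<integral>\<^sup>+\<omega>. (\<Sum>k. ennreal (cmod (Z k \<omega>) * r ^ k)) \<partial>M) \<noteq> \<infinity>"
    using C_finite by (simp add: ennreal_mult_eq_top_iff)
  then have "AE \<omega> in M. (\<Sum>k. ennreal (cmod (Z k \<omega>) * r ^ k)) \<noteq> \<infinity>"
    by (intro nn_integral_PInf_AE) simp_all
  then show ?thesis
    by eventually_elim (rule summable_suminf_not_top, use r in auto)
qed

text \<open>The exceptional null set must not depend on the point of the disc: it is a countable
  union over the radii \<open>1 - 1 / (j + 2)\<close>.\<close>

lemma AE_summable_ident_distr_power_disc:
  fixes Z :: "nat \<Rightarrow> 'a \<Rightarrow> complex"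
  assumes M: "prob_space M" and meas: "\<And>k. Z k \<in> borel_measurable M"
    and ident: "\<And>k. distr M borel (Z k) = distr M borel (Z 0)"
    and int: "integrable M (\<lambda>\<omega>. cmod (Z 0 \<omega>))"
  shows "AE \<omega> in M. \<forall>a. cmod a < 1 \<longrightarrow> summable (\<lambda>k. norm (Z k \<omega> * a ^ k))"
proof -
  have "AE \<omega> in M. \<forall>j::nat. summable (\<lambda>k. cmod (Z k \<omega>) * (1 - 1 / (real j + 2)) ^ k)"
    by (subst AE_all_countable, intro allI AE_summable_ident_distr_power[where Z=Z, OF M meas ident int])
      (simp_all add: field_simps)
  then show ?thesis
  proof eventually_elim
    case (elim \<omega>)
    show ?case
    proof (intro allI impI)
      fix a :: complex assume a: "cmod a < 1"
      obtain j :: nat where j: "1 / (1 - cmod a) < real j" using reals_Archimedean2 by blast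
      have "1 < real j * (1 - cmod a)" using a j by (simp add: field_simps)
      also have "\<dots> \<le> (real j + 2) * (1 - cmod a)" using a by (intro mult_right_mono) simp_all
      finally have "cmod a \<le> 1 - 1 / (real j + 2)" by (simp add: field_simps)
      then show "summable (\<lambda>k. norm (Z k \<omega> * a ^ k))"
        by (intro summable_comparison_test[OF _ elim[rule_format, of j]])
          (auto intro!: exI[of _ 0] mult_left_mono power_mono simp: norm_mult norm_power)
    qed
  qed
qed

lemma borel_measurable_Re_sum_rps:
  assumes [measurable]: "\<And>k. Z k \<in> borel_measurable M"
  shows "(\<lambda>\<omega>. Re (\<Sum>i<n. e i * rps (\<lambda>k. Z k \<omega>) (w i))) \<in> borel_measurable M"
  unfolding rps_def by measurable

lemma AE_LIMSEQ_Re_sum_rps: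
  fixes Z :: "nat \<Rightarrow> 'a \<Rightarrow> complex" and e w :: "nat \<Rightarrow> complex"
  assumes M: "prob_space M" and meas: "\<And>k. Z k \<in> borel_measurable M"
    and ident: "\<And>k. distr M borel (Z k) = distr M borel (Z 0)"
    and int: "integrable M (\<lambda>\<omega>. cmod (Z 0 \<omega>))"
    and w: "\<And>i. i < n \<Longrightarrow> cmod (w i) < 1"
  shows "AE \<omega> in M. (\<lambda>N. \<Sum>k<N. Re ((\<Sum>i<n. e i * w i ^ k) * Z k \<omega>))
    \<longlonglongrightarrow> Re (\<Sum>i<n. e i * rps (\<lambda>k. Z k \<omega>) (w i))"
  using AE_summable_ident_distr_power_disc[where Z=Z, OF M meas ident int]
proof eventually_elim
  case (elim \<omega>)
  have "(\<lambda>N. \<Sum>k<N. Z k \<omega> * w i ^ k) \<longlonglongrightarrow> rps (\<lambda>k. Z k \<omega>) (w i)" if "i < n" for i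
    unfolding rps_def
    by (rule summable_LIMSEQ, rule summable_norm_cancel, rule elim[rule_format], rule w[OF that])
  then have "(\<lambda>N. Re (\<Sum>i<n. e i * (\<Sum>k<N. Z k \<omega> * w i ^ k)))
      \<longlonglongrightarrow> Re (\<Sum>i<n. e i * rps (\<lambda>k. Z k \<omega>) (w i))"
    by (intro tendsto_intros) auto
  moreover have "(\<Sum>k<N. Re ((\<Sum>i<n. e i * w i ^ k) * Z k \<omega>)) = Re (\<Sum>i<n. e i * (\<Sum>k<N. Z k \<omega> * w i ^ k))" for N
    by (simp add: Re_sum[symmetric] sum_distrib_left sum_distrib_right sum.swap[of _ "{..<N}"] ac_simps)
  ultimately show ?case by simp
qed

lemma char_distr_sum_Re_mult_iid:
  fixes Z :: "nat \<Rightarrow> 'a \<Rightarrow> complex" and \<alpha> :: "nat \<Rightarrow> complex"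
  assumes M: "prob_space M" and [measurable]: "\<And>k. Z k \<in> borel_measurable M"
    and indep: "prob_space.indep_vars M (\<lambda>_. borel) Z UNIV"
    and ident: "\<And>k. distr M borel (Z k) = distr M borel (Z 0)"
  shows "char (distr M borel (\<lambda>\<omega>. \<Sum>k<N. Re (\<alpha> k * Z k \<omega>))) t =
    (\<Prod>k<N. char (distr M borel (\<lambda>\<omega>. Re (\<alpha> k * Z 0 \<omega>))) t)"
proof -
  interpret prob_space M by (rule M)
  have "indep_vars (\<lambda>_. borel) (\<lambda>k \<omega>. Re (\<alpha> k * Z k \<omega>)) {..<N}"
    by (rule indep_vars_compose2[where X=Z, OF indep_vars_subset[OF indep]]) auto
  then have "char (distr M borel (\<lambda>\<omega>. \<Sum>k<N. Re (\<alpha> k * Z k \<omega>))) t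
      = (\<Prod>k<N. char (distr M borel (\<lambda>\<omega>. Re (\<alpha> k * Z k \<omega>))) t)"
    by (rule char_distr_sum)
  also have "\<dots> = (\<Prod>k<N. char (distr M borel (\<lambda>\<omega>. Re (\<alpha> k * Z 0 \<omega>))) t)"
  proof (rule prod.cong[OF refl])
    fix k
    have "distr M borel (\<lambda>\<omega>. Re (\<alpha> k * Z k \<omega>)) = distr (distr M borel (Z k)) borel (\<lambda>z. Re (\<alpha> k * z))"
      by (subst distr_distr) (auto simp: comp_def)
    also have "\<dots> = distr (distr M borel (Z 0)) borel (\<lambda>z. Re (\<alpha> k * z))"
      by (subst ident) (rule refl)
    also have "\<dots> = distr M borel (\<lambda>\<omega>. Re (\<alpha> k * Z 0 \<omega>))"
      by (subst distr_distr) (auto simp: comp_def)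
    finally show "char (distr M borel (\<lambda>\<omega>. Re (\<alpha> k * Z k \<omega>))) t = char (distr M borel (\<lambda>\<omega>. Re (\<alpha> k * Z 0 \<omega>))) t"
      by simp
  qed
  finally show ?thesis .
qed

lemma (in prob_space) char_distr_LIMSEQ_of_AE:
  assumes [measurable]: "\<And>N. S N \<in> borel_measurable M" "F \<in> borel_measurable M"
    and lim: "AE \<omega> in M. (\<lambda>N. S N \<omega>) \<longlonglongrightarrow> F \<omega>"
  shows "(\<lambda>N. char (distr M borel (S N)) t) \<longlonglongrightarrow> char (distr M borel F) t"
proof -
  have "(\<lambda>N. CLINT \<omega>|M. iexp (t * S N \<omega>)) \<longlonglongrightarrow> (CLINT \<omega>|M. iexp (t * F \<omega>))"
  proof (rule integral_dominated_convergence[where w="\<lambda>_. 1"])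
    show "AE \<omega> in M. (\<lambda>N. iexp (t * S N \<omega>)) \<longlonglongrightarrow> iexp (t * F \<omega>)"
      using lim by eventually_elim (intro tendsto_intros)
  qed (auto simp: norm_exp_i_times)
  then show ?thesis by (simp add: char_def integral_distr)
qed

lemma char_Re_sum_rps_LIMSEQ_prod:
  fixes Z :: "nat \<Rightarrow> 'a \<Rightarrow> complex" and e w :: "nat \<Rightarrow> complex"
  assumes M: "prob_space M" and meas[measurable]: "\<And>k. Z k \<in> borel_measurable M"
    and indep: "prob_space.indep_vars M (\<lambda>_. borel) Z UNIV"
    and ident: "\<And>k. distr M borel (Z k) = distr M borel (Z 0)"
    and int: "integrable M (\<lambda>\<omega>. cmod (Z 0 \<omega>))"
    and w: "\<And>i. i < n \<Longrightarrow> cmod (w i) < 1"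
  shows "(\<lambda>N. \<Prod>k<N. char (distr M borel (\<lambda>\<omega>. Re ((\<Sum>i<n. e i * w i ^ k) * Z 0 \<omega>))) t)
          \<longlonglongrightarrow> char (distr M borel (\<lambda>\<omega>. Re (\<Sum>i<n. e i * rps (\<lambda>k. Z k \<omega>) (w i)))) t"
proof -
  have "(\<lambda>N. char (distr M borel (\<lambda>\<omega>. \<Sum>k<N. Re ((\<Sum>i<n. e i * w i ^ k) * Z k \<omega>))) t)
      \<longlonglongrightarrow> char (distr M borel (\<lambda>\<omega>. Re (\<Sum>i<n. e i * rps (\<lambda>k. Z k \<omega>) (w i)))) t"
  proof (rule prob_space.char_distr_LIMSEQ_of_AE[OF M])
    show "(\<lambda>\<omega>. Re (\<Sum>i<n. e i * rps (\<lambda>k. Z k \<omega>) (w i))) \<in> borel_measurable M"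
      by (rule borel_measurable_Re_sum_rps[OF meas])
  qed (use AE_LIMSEQ_Re_sum_rps[where Z=Z and n=n and w=w and e=e, OF M meas ident int w] in simp_all)
  then show ?thesis
    unfolding char_distr_sum_Re_mult_iid[where Z=Z, OF M meas indep ident] .
qed

lemma sums_norm_sum_powers_sq:
  fixes e w :: "nat \<Rightarrow> complex"
  assumes w: "\<And>i. i < n \<Longrightarrow> cmod (w i) < 1"
  shows "(\<lambda>k. (cmod (\<Sum>i<n. e i * w i ^ k))\<^sup>2) sums
           Re (\<Sum>i<n. \<Sum>j<n. e i * cnj (e j) / (1 - w i * cnj (w j)))"
proof -
  have expand: "complex_of_real ((cmod (\<Sum>i<n. e i * w i ^ k))\<^sup>2) =
      (\<Sum>i<n. \<Sum>j<n. e i * cnj (e j) * (w i * cnj (w j)) ^ k)" for k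
    unfolding complex_norm_square
    by (simp add: sum_distrib_left sum_distrib_right power_mult_distrib cnj_sum ac_simps)
      (rule sum.swap)
  have "(\<lambda>k. \<Sum>i<n. \<Sum>j<n. e i * cnj (e j) * (w i * cnj (w j)) ^ k) sums
      (\<Sum>i<n. \<Sum>j<n. e i * cnj (e j) / (1 - w i * cnj (w j)))"
  proof (intro sums_sum)
    fix i j assume "i \<in> {..<n}" "j \<in> {..<n}"
    then have "norm (w i * cnj (w j)) < 1"
      using w[of i] w[of j] by (simp add: norm_mult)
        (metis le_less_trans less_eq_real_def mult_left_le norm_ge_zero)
    then show "(\<lambda>k. e i * cnj (e j) * (w i * cnj (w j)) ^ k) sums (e i * cnj (e j) / (1 - w i * cnj (w j)))"
      using sums_mult[OF geometric_sums, of "w i * cnj (w j)" "e i * cnj (e j)"] by (simp add: divide_inverse)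
  qed
  then have "(\<lambda>k. complex_of_real ((cmod (\<Sum>i<n. e i * w i ^ k))\<^sup>2)) sums
      (\<Sum>i<n. \<Sum>j<n. e i * cnj (e j) / (1 - w i * cnj (w j)))"
    by (simp only: expand)
  then show ?thesis by (simp add: sums_complex_iff)
qed

section \<open>Second order expansion of characteristic functions\<close>

lemma abs_one_minus_sub_exp_le:
  fixes c :: real
  assumes "0 \<le> c" "c \<le> 1"
  shows "\<bar>(1 - c) - exp (- c)\<bar> \<le> c\<^sup>2"
proof -
  have "exp (- c) \<le> 1 / (1 + c)"
    using exp_ge_add_one_self[of c] assms by (simp add: exp_minus field_simps)
  also have "1 / (1 + c) \<le> 1 - c + c\<^sup>2"
    using assms by (simp add: field_simps power2_eq_square)
  finally show ?thesis using exp_ge_add_one_self[of "- c"] by simp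
qed

lemma min_sq_cube_le:
  fixes v a x \<epsilon> t :: real
  assumes v: "\<bar>v\<bar> \<le> a * x" and a: "0 \<le> a" "a \<le> \<epsilon>" and x: "0 \<le> x"
  shows "min (6 * v\<^sup>2) (\<bar>t\<bar> * \<bar>v\<bar> ^ 3) \<le> a\<^sup>2 * min (6 * x\<^sup>2) (\<bar>t\<bar> * \<epsilon> * x ^ 3)"
proof -
  have square: "6 * v\<^sup>2 \<le> a\<^sup>2 * (6 * x\<^sup>2)"
    using power_mono[OF v, of 2] by (simp add: power_mult_distrib)
  have "\<bar>v\<bar> ^ 3 \<le> a\<^sup>2 * (a * x ^ 3)"
    using power_mono[OF v, of 3] by (simp add: power_mult_distrib power3_eq_cube power2_eq_square mult_ac)
  also have "\<dots> \<le> a\<^sup>2 * (\<epsilon> * x ^ 3)"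
    using a x by (intro mult_left_mono mult_right_mono) simp_all
  finally have cube: "\<bar>v\<bar> ^ 3 \<le> a\<^sup>2 * (\<epsilon> * x ^ 3)" .
  show ?thesis
    unfolding mult_min_right[OF zero_le_power2]
    using square mult_left_mono[OF cube abs_ge_zero[of t]] by (intro min.mono) (simp_all add: ac_simps)
qed

lemma norm_prod_sub_exp_sum_le:
  fixes \<phi> :: "'i \<Rightarrow> complex" and b c :: "'i \<Rightarrow> real"
  assumes I: "finite I" and \<phi>: "\<And>k. k \<in> I \<Longrightarrow> cmod (\<phi> k) \<le> 1"
    and c: "\<And>k. k \<in> I \<Longrightarrow> 0 \<le> c k" "\<And>k. k \<in> I \<Longrightarrow> c k \<le> \<delta>" and \<delta>: "\<delta> \<le> 1"
    and b: "\<And>k. k \<in> I \<Longrightarrow> cmod (\<phi> k - complex_of_real (1 - c k)) \<le> b k"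
  shows "cmod ((\<Prod>k\<in>I. \<phi> k) - complex_of_real (exp (- (\<Sum>k\<in>I. c k)))) \<le> (\<Sum>k\<in>I. b k) + \<delta> * (\<Sum>k\<in>I. c k)"
proof -
  define p where "p = (\<Prod>k\<in>I. complex_of_real (1 - c k))"
  have abs_one_minus_c: "\<bar>1 - c k\<bar> \<le> 1" if "k \<in> I" for k
    using c[OF that] \<delta> by (auto simp: abs_if)
  have "cmod ((\<Prod>k\<in>I. \<phi> k) - p) \<le> (\<Sum>k\<in>I. cmod (\<phi> k - complex_of_real (1 - c k)))"
    unfolding p_def using \<phi> abs_one_minus_c by (intro norm_prod_diff) (auto simp del: of_real_diff)
  also have "\<dots> \<le> (\<Sum>k\<in>I. b k)" using b by (rule sum_mono)
  finally have first: "cmod ((\<Prod>k\<in>I. \<phi> k) - p) \<le> (\<Sum>k\<in>I. b k)" .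
  have "complex_of_real (exp (- (\<Sum>k\<in>I. c k))) = (\<Prod>k\<in>I. complex_of_real (exp (- c k)))"
    by (simp add: exp_sum[OF I] of_real_prod sum_negf[symmetric] del: sum_negf)
  then have "cmod (p - complex_of_real (exp (- (\<Sum>k\<in>I. c k))))
      \<le> (\<Sum>k\<in>I. cmod (complex_of_real (1 - c k) - complex_of_real (exp (- c k))))"
    unfolding p_def using c abs_one_minus_c by (auto intro!: norm_prod_diff simp del: of_real_diff)
  also have "\<dots> \<le> (\<Sum>k\<in>I. \<delta> * c k)"
  proof (rule sum_mono)
    fix k assume k: "k \<in> I"
    have "cmod (complex_of_real (1 - c k) - complex_of_real (exp (- c k))) = \<bar>(1 - c k) - exp (- c k)\<bar>"
      by (simp only: of_real_diff[symmetric] norm_of_real)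
    also have "\<dots> \<le> c k * c k"
      using abs_one_minus_sub_exp_le[of "c k"] c[OF k] \<delta> by (simp add: power2_eq_square)
    also have "\<dots> \<le> \<delta> * c k" using c[OF k] by (intro mult_right_mono) simp_all
    finally show "cmod (complex_of_real (1 - c k) - complex_of_real (exp (- c k))) \<le> \<delta> * c k" .
  qed
  finally have second: "cmod (p - complex_of_real (exp (- (\<Sum>k\<in>I. c k)))) \<le> \<delta> * (\<Sum>k\<in>I. c k)"
    by (simp add: sum_distrib_left)
  show ?thesis
    using norm_triangle_ineq[of "(\<Prod>k\<in>I. \<phi> k) - p" "p - complex_of_real (exp (- (\<Sum>k\<in>I. c k)))"]
      first second by simp
qed

text \<open>The last two assumptions say that the pseudo-covariance \<open>E[X\<^sub>0\<^sup>2]\<close> vanishes, i.e. \<open>X\<^sub>0\<close> is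
  a proper complex random variable.\<close>

locale proper_standard_variable = prob_space M for M :: "'a measure" +
  fixes X0 :: "'a \<Rightarrow> complex"
  assumes borel_measurable_X0 [measurable]: "X0 \<in> borel_measurable M"
    and integrable_sq: "integrable M (\<lambda>\<omega>. (cmod (X0 \<omega>))\<^sup>2)"
    and expectation_X0: "expectation X0 = 0"
    and expectation_sq: "expectation (\<lambda>\<omega>. (cmod (X0 \<omega>))\<^sup>2) = 1"
    and expectation_Re_sq_eq_Im_sq: "expectation (\<lambda>\<omega>. (Re (X0 \<omega>))\<^sup>2) = expectation (\<lambda>\<omega>. (Im (X0 \<omega>))\<^sup>2)"
    and expectation_Re_Im: "expectation (\<lambda>\<omega>. Re (X0 \<omega>) * Im (X0 \<omega>)) = 0"
begin

lemma integrable_norm: "integrable M (\<lambda>\<omega>. cmod (X0 \<omega>))"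
  by (rule square_integrable_imp_integrable) (simp_all add: integrable_sq)

lemma
  shows integrable_Re_mult: "integrable M (\<lambda>\<omega>. Re (\<alpha> * X0 \<omega>))"
    and expectation_Re_mult: "expectation (\<lambda>\<omega>. Re (\<alpha> * X0 \<omega>)) = 0"
    and integrable_Re_mult_sq: "integrable M (\<lambda>\<omega>. (Re (\<alpha> * X0 \<omega>))\<^sup>2)"
    and expectation_Re_mult_sq: "expectation (\<lambda>\<omega>. (Re (\<alpha> * X0 \<omega>))\<^sup>2) = (cmod \<alpha>)\<^sup>2 / 2"
proof -
  have "integrable M X0" using integrable_norm by (simp add: integrable_norm_iff)
  then show "integrable M (\<lambda>\<omega>. Re (\<alpha> * X0 \<omega>))" "expectation (\<lambda>\<omega>. Re (\<alpha> * X0 \<omega>)) = 0"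
    using expectation_X0 by simp_all
  have bounded_by_sq: "integrable M f" if [measurable]: "f \<in> borel_measurable M"
    and "\<And>\<omega>. \<bar>f \<omega>\<bar> \<le> (cmod (X0 \<omega>))\<^sup>2" for f
    using that by (intro Bochner_Integration.integrable_bound[OF integrable_sq] AE_I2) auto
  have int_Re: "integrable M (\<lambda>\<omega>. (Re (X0 \<omega>))\<^sup>2)" and int_Im: "integrable M (\<lambda>\<omega>. (Im (X0 \<omega>))\<^sup>2)"
    by (intro bounded_by_sq; simp add: cmod_power2)+
  have int_Re_Im: "integrable M (\<lambda>\<omega>. Re (X0 \<omega>) * Im (X0 \<omega>))"
    by (intro bounded_by_sq) (simp_all add: abs_mult power2_eq_square mult_mono abs_Re_le_cmod abs_Im_le_cmod)
  have Re_mult_sq: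
    "(Re (\<alpha> * x))\<^sup>2 = (Re \<alpha>)\<^sup>2 * (Re x)\<^sup>2 + (Im \<alpha>)\<^sup>2 * (Im x)\<^sup>2 - 2 * Re \<alpha> * Im \<alpha> * (Re x * Im x)" for x
    by (simp add: power2_eq_square algebra_simps)
  show "integrable M (\<lambda>\<omega>. (Re (\<alpha> * X0 \<omega>))\<^sup>2)"
    unfolding Re_mult_sq using int_Re int_Im int_Re_Im by simp
  have "expectation (\<lambda>\<omega>. (Re (X0 \<omega>))\<^sup>2) + expectation (\<lambda>\<omega>. (Im (X0 \<omega>))\<^sup>2) = 1"
    using expectation_sq Bochner_Integration.integral_add[OF int_Re int_Im] by (simp add: cmod_power2)
  then have E_Re: "expectation (\<lambda>\<omega>. (Re (X0 \<omega>))\<^sup>2) = 1/2"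
    and E_Im: "expectation (\<lambda>\<omega>. (Im (X0 \<omega>))\<^sup>2) = 1/2"
    using expectation_Re_sq_eq_Im_sq by auto
  show "expectation (\<lambda>\<omega>. (Re (\<alpha> * X0 \<omega>))\<^sup>2) = (cmod \<alpha>)\<^sup>2 / 2"
    unfolding Re_mult_sq using int_Re int_Im int_Re_Im expectation_Re_Im
    by (simp add: E_Re E_Im cmod_power2)
qed

text \<open>The error term \<open>min (6 |X\<^sub>0|\<^sup>2) (|t| \<epsilon> |X\<^sub>0|\<^sup>3)\<close> is dominated by \<open>6 |X\<^sub>0|\<^sup>2\<close> and tends to
  zero with \<open>\<epsilon>\<close>; no third moment is needed.\<close>

lemma char_Re_mult_approx:
  assumes eps: "cmod \<alpha> \<le> \<epsilon>"
  shows "cmod (char (distr M borel (\<lambda>\<omega>. Re (\<alpha> * X0 \<omega>))) t - (1 - t\<^sup>2 * (cmod \<alpha>)\<^sup>2 / 4))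
     \<le> (cmod \<alpha>)\<^sup>2 * (t\<^sup>2 / 6 * expectation (\<lambda>\<omega>. min (6 * (cmod (X0 \<omega>))\<^sup>2) (\<bar>t\<bar> * \<epsilon> * (cmod (X0 \<omega>)) ^ 3)))"
proof -
  define V where "V = (\<lambda>\<omega>. Re (\<alpha> * X0 \<omega>))"
  define G where "G = (\<lambda>\<omega>. min (6 * (cmod (X0 \<omega>))\<^sup>2) (\<bar>t\<bar> * \<epsilon> * (cmod (X0 \<omega>)) ^ 3))"
  have [measurable]: "V \<in> borel_measurable M" "G \<in> borel_measurable M" unfolding V_def G_def by measurable
  have abs_V: "\<bar>V \<omega>\<bar> \<le> cmod \<alpha> * cmod (X0 \<omega>)" for \<omega>
    unfolding V_def by (metis abs_Re_le_cmod norm_mult)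
  have "0 \<le> \<epsilon>" using eps norm_ge_zero[of \<alpha>] by linarith
  then have G_nonneg: "0 \<le> G \<omega>" for \<omega> unfolding G_def by simp
  have "norm (G \<omega>) \<le> norm (6 * (cmod (X0 \<omega>))\<^sup>2)" for \<omega>
    using G_nonneg[of \<omega>] unfolding G_def by simp
  then have integrable_G: "integrable M G"
    by (intro Bochner_Integration.integrable_bound[OF integrable_mult_right[OF integrable_sq, of 6]] AE_I2)
      simp_all
  have "expectation (\<lambda>x. min (6 * (V x)\<^sup>2) (\<bar>t\<bar> * \<bar>V x\<bar> ^ 3)) \<le> expectation (\<lambda>\<omega>. (cmod \<alpha>)\<^sup>2 * G \<omega>)"
  proof (rule integral_mono')
    show "integrable M (\<lambda>\<omega>. (cmod \<alpha>)\<^sup>2 * G \<omega>)" using integrable_G by simp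
    fix \<omega>
    show "min (6 * (V \<omega>)\<^sup>2) (\<bar>t\<bar> * \<bar>V \<omega>\<bar> ^ 3) \<le> (cmod \<alpha>)\<^sup>2 * G \<omega>"
      unfolding G_def using abs_V eps by (intro min_sq_cube_le) simp_all
    show "0 \<le> (cmod \<alpha>)\<^sup>2 * G \<omega>" using G_nonneg[of \<omega>] by simp
  qed
  then have "t\<^sup>2 / 6 * expectation (\<lambda>x. min (6 * (V x)\<^sup>2) (\<bar>t\<bar> * \<bar>V x\<bar> ^ 3))
      \<le> t\<^sup>2 / 6 * ((cmod \<alpha>)\<^sup>2 * expectation G)"
    by (intro mult_left_mono) simp_all
  then have "t\<^sup>2 / 6 * expectation (\<lambda>x. min (6 * (V x)\<^sup>2) (\<bar>t\<bar> * \<bar>V x\<bar> ^ 3))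
      \<le> (cmod \<alpha>)\<^sup>2 * (t\<^sup>2 / 6 * expectation G)"
    by (simp only: ac_simps)
  moreover have "cmod (char (distr M borel V) t - (1 - t\<^sup>2 * ((cmod \<alpha>)\<^sup>2 / 2) / 2)) \<le>
      t\<^sup>2 / 6 * expectation (\<lambda>x. min (6 * (V x)\<^sup>2) (\<bar>t\<bar> * \<bar>V x\<bar> ^ 3))"
    using integrable_Re_mult integrable_Re_mult_sq expectation_Re_mult expectation_Re_mult_sq
    by (intro char_approx3') (simp_all add: V_def)
  ultimately show ?thesis unfolding V_def G_def by simp
qed

lemma expectation_min_tendsto_0:
  assumes \<epsilon>: "\<epsilon> \<longlonglongrightarrow> 0" "\<And>m. 0 \<le> \<epsilon> m"
  shows "(\<lambda>m. expectation (\<lambda>\<omega>. min (6 * (cmod (X0 \<omega>))\<^sup>2) (\<bar>t\<bar> * \<epsilon> m * (cmod (X0 \<omega>)) ^ 3))) \<longlonglongrightarrow> 0"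
proof -
  have "(\<lambda>m. expectation (\<lambda>\<omega>. min (6 * (cmod (X0 \<omega>))\<^sup>2) (\<bar>t\<bar> * \<epsilon> m * (cmod (X0 \<omega>)) ^ 3)))
      \<longlonglongrightarrow> expectation (\<lambda>\<omega>. min (6 * (cmod (X0 \<omega>))\<^sup>2) (\<bar>t\<bar> * 0 * (cmod (X0 \<omega>)) ^ 3))"
    using integrable_sq \<epsilon>
    by (intro integral_dominated_convergence[where w="\<lambda>\<omega>. 6 * (cmod (X0 \<omega>))\<^sup>2"] AE_I2 tendsto_intros)
      simp_all
  then show ?thesis by simp
qed

lemma norm_lim_prod_char_sub_exp_le:
  fixes \<alpha> :: "nat \<Rightarrow> complex"
  assumes \<epsilon>: "\<And>k. cmod (\<alpha> k) \<le> \<epsilon>" and small: "t\<^sup>2 * \<epsilon>\<^sup>2 / 4 \<le> 1"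
    and A: "(\<lambda>k. (cmod (\<alpha> k))\<^sup>2) sums A"
    and lim: "(\<lambda>N. \<Prod>k<N. char (distr M borel (\<lambda>\<omega>. Re (\<alpha> k * X0 \<omega>))) t) \<longlonglongrightarrow> \<psi>"
  shows "cmod (\<psi> - complex_of_real (exp (- (t\<^sup>2 * A / 4)))) \<le>
     A * (t\<^sup>2 / 6 * expectation (\<lambda>\<omega>. min (6 * (cmod (X0 \<omega>))\<^sup>2) (\<bar>t\<bar> * \<epsilon> * (cmod (X0 \<omega>)) ^ 3)))
     + t\<^sup>2 * \<epsilon>\<^sup>2 / 4 * (t\<^sup>2 * A / 4)"
proof -
  define G where "G = expectation (\<lambda>\<omega>. min (6 * (cmod (X0 \<omega>))\<^sup>2) (\<bar>t\<bar> * \<epsilon> * (cmod (X0 \<omega>)) ^ 3))"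
  define \<phi> where "\<phi> k = char (distr M borel (\<lambda>\<omega>. Re (\<alpha> k * X0 \<omega>))) t" for k
  define c where "c k = t\<^sup>2 * (cmod (\<alpha> k))\<^sup>2 / 4" for k
  have "0 \<le> \<epsilon>" using \<epsilon>[of 0] norm_ge_zero[of "\<alpha> 0"] by linarith
  then have "0 \<le> G" unfolding G_def by (intro integral_nonneg_AE AE_I2) simp
  have c_le: "c k \<le> t\<^sup>2 * \<epsilon>\<^sup>2 / 4" for k
    unfolding c_def using \<epsilon>[of k] by (intro divide_right_mono mult_left_mono power_mono) simp_all
  have norm_\<phi>: "cmod (\<phi> k) \<le> 1" for k
    unfolding \<phi>_def by (intro real_distribution.cmod_char_le_1 real_distribution_distr) simp
  have partial_le: "(\<Sum>k<N. (cmod (\<alpha> k))\<^sup>2) \<le> A" for N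
    using A by (auto simp: sums_iff intro!: sum_le_suminf)
  have c_sums: "c sums (t\<^sup>2 * A / 4)"
    unfolding c_def using sums_mult[OF A, of "t\<^sup>2 / 4"] by (simp add: ac_simps)
  have "cmod ((\<Prod>k<N. \<phi> k) - complex_of_real (exp (- (\<Sum>k<N. c k))))
      \<le> A * (t\<^sup>2 / 6 * G) + t\<^sup>2 * \<epsilon>\<^sup>2 / 4 * (t\<^sup>2 * A / 4)" for N
  proof -
    have "cmod ((\<Prod>k<N. \<phi> k) - complex_of_real (exp (- (\<Sum>k<N. c k))))
        \<le> (\<Sum>k<N. (cmod (\<alpha> k))\<^sup>2 * (t\<^sup>2 / 6 * G)) + t\<^sup>2 * \<epsilon>\<^sup>2 / 4 * (\<Sum>k<N. c k)"
      using norm_\<phi> c_le small char_Re_mult_approx[OF \<epsilon>, of _ t]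
      by (intro norm_prod_sub_exp_sum_le) (simp_all add: \<phi>_def c_def G_def)
    also have "\<dots> \<le> A * (t\<^sup>2 / 6 * G) + t\<^sup>2 * \<epsilon>\<^sup>2 / 4 * (t\<^sup>2 * A / 4)"
      using partial_le[of N] \<open>0 \<le> G\<close> sum_le_suminf[OF sums_summable[OF c_sums], of "{..<N}"]
      unfolding sum_distrib_right[symmetric] sums_unique[OF c_sums, symmetric]
      by (intro add_mono mult_right_mono mult_left_mono) (simp_all add: c_def)
    finally show ?thesis .
  qed
  moreover have "(\<lambda>N. cmod ((\<Prod>k<N. \<phi> k) - complex_of_real (exp (- (\<Sum>k<N. c k)))))
      \<longlonglongrightarrow> cmod (\<psi> - complex_of_real (exp (- (t\<^sup>2 * A / 4))))"
    using lim c_sums unfolding \<phi>_def sums_def by (intro tendsto_intros)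
  ultimately show ?thesis
    unfolding G_def by (intro LIMSEQ_le_const2) auto
qed

end

section \<open>The standard complex Gaussian\<close>

lemma distr_lborel_pair_Complex:
  "distr (lborel \<Otimes>\<^sub>M lborel) borel (\<lambda>(x, y). Complex x y) = (lborel :: complex measure)"
proof (rule lborel_eqI[symmetric])
  fix l u :: complex
  assume le: "\<And>b. b \<in> Basis \<Longrightarrow> l \<bullet> b \<le> u \<bullet> b"
  have le_Re: "Re l \<le> Re u" and le_Im: "Im l \<le> Im u"
    using le[of 1] le[of \<i>] by simp_all
  have [measurable]: "(\<lambda>(x, y). Complex x y) \<in> borel_measurable (lborel \<Otimes>\<^sub>M lborel)"
  proof -
    have "(\<lambda>(x, y). Complex x y) = (\<lambda>p. complex_of_real (fst p) + \<i> * complex_of_real (snd p))"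
      by (auto simp: complex_eq_iff)
    then show ?thesis by simp
  qed
  have "(\<lambda>(x, y). Complex x y) -` box l u \<inter> space (lborel \<Otimes>\<^sub>M lborel) =
      {Re l<..<Re u} \<times> {Im l<..<Im u}"
    by (auto simp: box_def Basis_complex_def space_pair_measure)
  then have "emeasure (distr (lborel \<Otimes>\<^sub>M lborel) borel (\<lambda>(x, y). Complex x y)) (box l u)
      = emeasure (lborel \<Otimes>\<^sub>M lborel) ({Re l<..<Re u} \<times> {Im l<..<Im u})"
    by (subst emeasure_distr) simp_all
  also have "\<dots> = ennreal (Re u - Re l) * ennreal (Im u - Im l)"
    by (simp add: lborel.emeasure_pair_measure_Times le_Re le_Im)
  also have "\<dots> = ennreal (\<Prod>b\<in>Basis. (u - l) \<bullet> b)"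
    by (simp add: Basis_complex_def ennreal_mult'[symmetric] le_Re le_Im)
  finally show "emeasure (distr (lborel \<Otimes>\<^sub>M lborel) borel (\<lambda>(x, y). Complex x y)) (box l u) =
      ennreal (\<Prod>b\<in>Basis. (u - l) \<bullet> b)" .
qed simp

definition gauss_marginal_density :: "real \<Rightarrow> real"
  where "gauss_marginal_density = normal_density 0 (sqrt (1/2))"

lemma gauss_marginal_density_eq: "gauss_marginal_density x = exp (- x\<^sup>2) / sqrt pi"
  unfolding gauss_marginal_density_def normal_density_def by (simp add: field_simps)

lemma borel_measurable_gauss_marginal_density [measurable]:
  "gauss_marginal_density \<in> borel_measurable borel"
  unfolding gauss_marginal_density_eq[abs_def] by measurable

lemma prob_space_gauss_marginal: "prob_space (density lborel gauss_marginal_density)"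
  unfolding gauss_marginal_density_def by (rule prob_space_normal_density) simp

lemma char_gauss_marginal:
  "char (density lborel gauss_marginal_density) t = complex_of_real (exp (- (t\<^sup>2 / 4)))"
proof -
  define S where "S = std_normal_distribution"
  interpret S: prob_space S unfolding S_def by (rule prob_space_normal_density) simp
  have [measurable_cong]: "sets S = sets borel" unfolding S_def by simp
  have "distributed S lborel (\<lambda>x. x) std_normal_density"
    unfolding distributed_def S_def by (simp add: distr_id2)
  then have "distributed S lborel (\<lambda>x. 0 + sqrt (1/2) * x) (normal_density (0 + sqrt (1/2) * 0) (\<bar>sqrt (1/2)\<bar> * 1))"
    by (intro S.normal_density_affine) simp_all
  then have scaled: "distr S lborel (\<lambda>x. sqrt (1/2) * x) = density lborel gauss_marginal_density"
    unfolding distributed_def gauss_marginal_density_def by simp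
  have "char (density lborel gauss_marginal_density) t = char (distr S borel (\<lambda>x. sqrt (1/2) * x)) t"
    by (subst scaled[symmetric]) (intro arg_cong2[where f=char] distr_cong refl, simp_all)
  also have "\<dots> = char S (t * sqrt (1/2))"
    unfolding char_def by (subst integral_distr) (simp_all add: ac_simps)
  also have "\<dots> = complex_of_real (exp (- ((t * sqrt (1/2))\<^sup>2) / 2))"
    unfolding S_def by (simp add: char_std_normal_distribution)
  finally show ?thesis by (simp add: power_mult_distrib)
qed

lemma integrable_abs_gauss_marginal: "integrable (density lborel gauss_marginal_density) abs"
  using integrable_normal_moment_abs[of "sqrt (1/2)" 0 1]
  by (subst integrable_density) (simp_all add: gauss_marginal_density_def)

lemma
  shows distr_pair_fst_gauss_marginal:
    "distr (density lborel gauss_marginal_density \<Otimes>\<^sub>M density lborel gauss_marginal_density) borel fst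
      = density lborel gauss_marginal_density" (is "?fst")
    and distr_pair_snd_gauss_marginal:
    "distr (density lborel gauss_marginal_density \<Otimes>\<^sub>M density lborel gauss_marginal_density) borel snd
      = density lborel gauss_marginal_density" (is "?snd")
proof -
  define D where "D = density lborel gauss_marginal_density"
  interpret D: prob_space D unfolding D_def by (rule prob_space_gauss_marginal)
  have "distr (D \<Otimes>\<^sub>M D) borel fst = distr (D \<Otimes>\<^sub>M D) D fst"
    by (rule distr_cong) (simp_all add: D_def)
  then show ?fst using D.distr_pair_fst unfolding D_def by simp
  show ?snd unfolding D_def[symmetric]
  proof (rule measure_eqI)
    fix A assume "A \<in> sets (distr (D \<Otimes>\<^sub>M D) borel snd)"
    then have A: "A \<in> sets D" by (simp add: D_def)
    have "emeasure (distr (D \<Otimes>\<^sub>M D) borel snd) A = emeasure (D \<Otimes>\<^sub>M D) (space D \<times> A)"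
      using A by (subst emeasure_distr) (auto simp: space_pair_measure D_def intro!: arg_cong2[where f=emeasure])
    also have "\<dots> = emeasure D A"
      using A by (simp add: D.emeasure_pair_measure_Times D.emeasure_space_1)
    finally show "emeasure (distr (D \<Otimes>\<^sub>M D) borel snd) A = emeasure D A" .
  qed (simp add: D_def)
qed

lemma density_pair_gauss_marginal:
  "density (lborel \<Otimes>\<^sub>M lborel) (\<lambda>(x, y). ennreal (gauss_marginal_density x) * ennreal (gauss_marginal_density y))
    = density lborel gauss_marginal_density \<Otimes>\<^sub>M density lborel gauss_marginal_density"
proof (rule pair_measure_density[symmetric])
  show "sigma_finite_measure (density lborel gauss_marginal_density)"
    using prob_space_gauss_marginal by (rule prob_space_imp_sigma_finite)
qed (simp_all add: sigma_finite_lborel)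

lemma distr_Re_Im_density_lborel_complex:
  fixes g :: "complex \<Rightarrow> ennreal"
  assumes [measurable]: "g \<in> borel_measurable borel"
  shows "distr (density lborel g) (borel \<Otimes>\<^sub>M borel) (\<lambda>y. (Re y, Im y))
    = density (lborel \<Otimes>\<^sub>M lborel) (\<lambda>(x, y). g (Complex x y))"
proof -
  define C where "C = (\<lambda>(x, y). Complex x y)"
  define L where "L = (lborel \<Otimes>\<^sub>M lborel :: (real \<times> real) measure)"
  have "C = (\<lambda>p. complex_of_real (fst p) + \<i> * complex_of_real (snd p))"
    by (auto simp: complex_eq_iff C_def)
  then have [measurable]: "C \<in> measurable L borel" unfolding L_def by simp
  have sets_L: "sets L = sets (borel \<Otimes>\<^sub>M borel)" unfolding L_def
    by (rule sets_pair_measure_cong) simp_all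
  have "density (lborel :: complex measure) g = density (distr L borel C) g"
    unfolding L_def C_def distr_lborel_pair_Complex ..
  also have "\<dots> = distr (density L (\<lambda>p. g (C p))) borel C"
    by (rule density_distr) simp_all
  finally have "distr (density lborel g) (borel \<Otimes>\<^sub>M borel) (\<lambda>y. (Re y, Im y))
      = distr (density L (\<lambda>p. g (C p))) (borel \<Otimes>\<^sub>M borel) ((\<lambda>y. (Re y, Im y)) \<circ> C)"
    by (simp only:) (rule distr_distr; simp)
  also have "\<dots> = distr (density L (\<lambda>p. g (C p))) (borel \<Otimes>\<^sub>M borel) (\<lambda>p. p)"
    by (rule distr_cong) (auto simp: C_def)
  also have "\<dots> = density L (\<lambda>p. g (C p))"
    by (rule distr_id2) (simp add: sets_L)
  also have "(\<lambda>p. g (C p)) = (\<lambda>(x, y). g (Complex x y))"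
    by (auto simp: C_def)
  finally show ?thesis unfolding L_def .
qed

lemma distr_Re_Im_complex_gaussian:
  fixes Y :: "'b \<Rightarrow> complex"
  assumes "distributed N lborel Y (\<lambda>y. ennreal (exp (- (cmod y)\<^sup>2) / pi))"
  shows "distr N (borel \<Otimes>\<^sub>M borel) (\<lambda>\<omega>. (Re (Y \<omega>), Im (Y \<omega>))) =
         density lborel gauss_marginal_density \<Otimes>\<^sub>M density lborel gauss_marginal_density"
proof -
  define g where "g = (\<lambda>y::complex. ennreal (exp (- (cmod y)\<^sup>2) / pi))"
  have Ym: "Y \<in> measurable N lborel" and Y_distr: "distr N lborel Y = density lborel g"
    using assms unfolding distributed_def g_def by auto
  have [measurable]: "g \<in> borel_measurable borel" unfolding g_def by measurable
  have "distr N (borel \<Otimes>\<^sub>M borel) (\<lambda>\<omega>. (Re (Y \<omega>), Im (Y \<omega>))) =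
      distr (density lborel g) (borel \<Otimes>\<^sub>M borel) (\<lambda>y. (Re y, Im y))"
    using Ym unfolding Y_distr[symmetric] by (subst distr_distr) (auto simp: comp_def)
  also have "\<dots> = density (lborel \<Otimes>\<^sub>M lborel) (\<lambda>(x, y). g (Complex x y))"
    by (rule distr_Re_Im_density_lborel_complex) measurable
  also have "(\<lambda>(x, y). g (Complex x y)) =
      (\<lambda>(x, y). ennreal (gauss_marginal_density x) * ennreal (gauss_marginal_density y))"
    by (auto simp: g_def gauss_marginal_density_eq cmod_power2 exp_add[symmetric] field_simps
        ennreal_mult[symmetric])
  also have "density (lborel \<Otimes>\<^sub>M lborel) \<dots>
      = density lborel gauss_marginal_density \<Otimes>\<^sub>M density lborel gauss_marginal_density"
    by (rule density_pair_gauss_marginal)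
  finally show ?thesis .
qed

context
  fixes N :: "'b measure" and Y :: "'b \<Rightarrow> complex"
  assumes N: "prob_space N"
    and Y_gauss: "distributed N lborel Y (\<lambda>y. ennreal (exp (- (cmod y)\<^sup>2) / pi))"
begin

interpretation prob_space N by (rule N)

lemma borel_measurable_complex_gaussian [measurable]: "Y \<in> borel_measurable N"
  using Y_gauss unfolding distributed_def by auto

lemma
  shows distr_Re_complex_gaussian: "distr N borel (\<lambda>\<omega>. Re (Y \<omega>)) = density lborel gauss_marginal_density"
    and distr_Im_complex_gaussian: "distr N borel (\<lambda>\<omega>. Im (Y \<omega>)) = density lborel gauss_marginal_density"
proof -
  have [measurable]: "(\<lambda>\<omega>. (Re (Y \<omega>), Im (Y \<omega>))) \<in> measurable N (borel \<Otimes>\<^sub>M borel)" by measurable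
  have "distr N borel (\<lambda>\<omega>. Re (Y \<omega>)) = distr (distr N (borel \<Otimes>\<^sub>M borel) (\<lambda>\<omega>. (Re (Y \<omega>), Im (Y \<omega>)))) borel fst"
    by (subst distr_distr) (simp_all add: comp_def)
  then show "distr N borel (\<lambda>\<omega>. Re (Y \<omega>)) = density lborel gauss_marginal_density"
    unfolding distr_Re_Im_complex_gaussian[OF Y_gauss] distr_pair_fst_gauss_marginal .
  have "distr N borel (\<lambda>\<omega>. Im (Y \<omega>)) = distr (distr N (borel \<Otimes>\<^sub>M borel) (\<lambda>\<omega>. (Re (Y \<omega>), Im (Y \<omega>)))) borel snd"
    by (subst distr_distr) (simp_all add: comp_def)
  then show "distr N borel (\<lambda>\<omega>. Im (Y \<omega>)) = density lborel gauss_marginal_density"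
    unfolding distr_Re_Im_complex_gaussian[OF Y_gauss] distr_pair_snd_gauss_marginal .
qed

lemma char_Re_mult_complex_gaussian:
  "char (distr N borel (\<lambda>\<omega>. Re (c * Y \<omega>))) t = complex_of_real (exp (- (t\<^sup>2 * (cmod c)\<^sup>2 / 4)))"
proof -
  have char_scaled: "char (distr N borel (\<lambda>\<omega>. a * f (Y \<omega>))) t = complex_of_real (exp (- ((t * a)\<^sup>2 / 4)))"
    if [measurable]: "f \<in> borel_measurable borel"
      and f: "distr N borel (\<lambda>\<omega>. f (Y \<omega>)) = density lborel gauss_marginal_density" for f :: "complex \<Rightarrow> real" and a
  proof -
    have "char (distr N borel (\<lambda>\<omega>. a * f (Y \<omega>))) t = (CLINT \<omega>|N. iexp (t * (a * f (Y \<omega>))))"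
      unfolding char_def by (subst integral_distr) simp_all
    also have "\<dots> = (CLINT x|distr N borel (\<lambda>\<omega>. f (Y \<omega>)). iexp ((t * a) * x))"
      by (subst integral_distr) (simp_all add: ac_simps)
    also have "\<dots> = char (density lborel gauss_marginal_density) (t * a)"
      unfolding char_def f ..
    finally show ?thesis unfolding char_gauss_marginal .
  qed
  have "indep_var borel (\<lambda>\<omega>. Re (Y \<omega>)) borel (\<lambda>\<omega>. Im (Y \<omega>))"
    by (subst indep_var_distribution_eq)
      (simp add: distr_Re_complex_gaussian distr_Im_complex_gaussian distr_Re_Im_complex_gaussian[OF Y_gauss])
  then have indep: "indep_var borel (\<lambda>\<omega>. Re c * Re (Y \<omega>)) borel (\<lambda>\<omega>. (- Im c) * Im (Y \<omega>))"
    using indep_var_compose[of borel _ borel _ "\<lambda>x. Re c * x" borel "\<lambda>x. (- Im c) * x" borel]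
    by (simp add: comp_def)
  have "char (distr N borel (\<lambda>\<omega>. Re (c * Y \<omega>))) t =
      char (distr N borel (\<lambda>\<omega>. Re c * Re (Y \<omega>) + (- Im c) * Im (Y \<omega>))) t"
    by simp
  also have "\<dots> = char (distr N borel (\<lambda>\<omega>. Re c * Re (Y \<omega>))) t * char (distr N borel (\<lambda>\<omega>. (- Im c) * Im (Y \<omega>))) t"
    by (rule char_distr_add[OF indep])
  also have "\<dots> = complex_of_real (exp (- ((t * Re c)\<^sup>2 / 4))) * complex_of_real (exp (- ((t * (- Im c))\<^sup>2 / 4)))"
    using char_scaled[OF _ distr_Re_complex_gaussian, of "Re c"]
      char_scaled[OF _ distr_Im_complex_gaussian, of "- Im c"]
    by simp
  also have "\<dots> = complex_of_real (exp (- (t\<^sup>2 * (cmod c)\<^sup>2 / 4)))"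
    unfolding of_real_mult[symmetric] exp_add[symmetric]
    by (simp add: cmod_power2 power_mult_distrib algebra_simps add_divide_distrib)
  finally show ?thesis .
qed

lemma integrable_norm_complex_gaussian: "integrable N (\<lambda>\<omega>. cmod (Y \<omega>))"
proof -
  have "integrable N (\<lambda>\<omega>. \<bar>Re (Y \<omega>)\<bar>)"
    using integrable_abs_gauss_marginal unfolding distr_Re_complex_gaussian[symmetric]
    by (subst (asm) integrable_distr_eq) simp_all
  moreover have "integrable N (\<lambda>\<omega>. \<bar>Im (Y \<omega>)\<bar>)"
    using integrable_abs_gauss_marginal unfolding distr_Im_complex_gaussian[symmetric]
    by (subst (asm) integrable_distr_eq) simp_all
  ultimately show ?thesis
    by (rule Bochner_Integration.integrable_bound[OF Bochner_Integration.integrable_add])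
      (auto intro!: AE_I2 cmod_le)
qed

end

section \<open>Limits of the characteristic functions\<close>

lemma char_Re_sum_rps_complex_gaussian:
  fixes N :: "'b measure" and Y :: "nat \<Rightarrow> 'b \<Rightarrow> complex" and z lam :: "nat \<Rightarrow> complex"
  assumes N: "prob_space N"
    and Y_indep: "prob_space.indep_vars N (\<lambda>_. borel) Y UNIV"
    and Y_gauss: "\<And>k. distributed N lborel (Y k) (\<lambda>y. ennreal (exp (- (cmod y)\<^sup>2) / pi))"
    and z: "\<And>i. i < n \<Longrightarrow> cmod (z i) < 1"
  shows "char (distr N borel (\<lambda>\<omega>. Re (\<Sum>i<n. lam i * rps (\<lambda>k. Y k \<omega>) (z i)))) t =
    complex_of_real (exp (- (t\<^sup>2 * Re (\<Sum>i<n. \<Sum>j<n. lam i * cnj (lam j) / (1 - z i * cnj (z j))) / 4)))"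
proof -
  define K where "K = Re (\<Sum>i<n. \<Sum>j<n. lam i * cnj (lam j) / (1 - z i * cnj (z j)))"
  define c where "c k = t\<^sup>2 * (cmod (\<Sum>i<n. lam i * z i ^ k))\<^sup>2 / 4" for k
  have Y_meas: "Y k \<in> borel_measurable N" for k
    by (rule borel_measurable_complex_gaussian[OF N Y_gauss])
  have Y_ident: "distr N borel (Y k) = distr N borel (Y 0)" for k
  proof -
    have "distr N borel (Y j) = distr N lborel (Y j)" for j by (rule distr_cong) simp_all
    then show ?thesis using Y_gauss[of k] Y_gauss[of 0] unfolding distributed_def by simp
  qed
  have "(\<lambda>N'. \<Prod>k<N'. char (distr N borel (\<lambda>\<omega>. Re ((\<Sum>i<n. lam i * z i ^ k) * Y 0 \<omega>))) t)
      \<longlonglongrightarrow> char (distr N borel (\<lambda>\<omega>. Re (\<Sum>i<n. lam i * rps (\<lambda>k. Y k \<omega>) (z i)))) t"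
    using N Y_meas Y_indep Y_ident integrable_norm_complex_gaussian[OF N Y_gauss] z
    by (rule char_Re_sum_rps_LIMSEQ_prod)
  moreover have "(\<Prod>k<N'. char (distr N borel (\<lambda>\<omega>. Re ((\<Sum>i<n. lam i * z i ^ k) * Y 0 \<omega>))) t) =
      complex_of_real (exp (- (\<Sum>k<N'. c k)))" for N'
  proof -
    have "(\<Prod>k<N'. char (distr N borel (\<lambda>\<omega>. Re ((\<Sum>i<n. lam i * z i ^ k) * Y 0 \<omega>))) t) =
        (\<Prod>k<N'. complex_of_real (exp (- c k)))"
      unfolding c_def by (intro prod.cong refl char_Re_mult_complex_gaussian[OF N Y_gauss])
    also have "\<dots> = complex_of_real (exp (\<Sum>k<N'. - c k))"
      by (simp add: exp_sum of_real_prod)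
    finally show ?thesis by (simp add: sum_negf)
  qed
  ultimately have "(\<lambda>N'. complex_of_real (exp (- (\<Sum>k<N'. c k))))
      \<longlonglongrightarrow> char (distr N borel (\<lambda>\<omega>. Re (\<Sum>i<n. lam i * rps (\<lambda>k. Y k \<omega>) (z i)))) t"
    by simp
  moreover have "c sums (t\<^sup>2 * K / 4)"
    using sums_mult[OF sums_norm_sum_powers_sq[where e=lam, OF z], where c="t\<^sup>2 / 4"]
    unfolding c_def K_def by (simp add: ac_simps)
  then have "(\<lambda>N'. complex_of_real (exp (- (\<Sum>k<N'. c k)))) \<longlonglongrightarrow> complex_of_real (exp (- (t\<^sup>2 * K / 4)))"
    unfolding sums_def by (intro tendsto_intros)
  ultimately show ?thesis
    unfolding K_def by (rule LIMSEQ_unique)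
qed

lemma char_Re_sum_rps_tendsto_gaussian:
  fixes M :: "'a measure" and X :: "nat \<Rightarrow> 'a \<Rightarrow> complex" and e a :: "nat \<Rightarrow> nat \<Rightarrow> complex"
  assumes X0: "proper_standard_variable M (X 0)"
    and X_meas: "\<And>k. X k \<in> borel_measurable M"
    and X_indep: "prob_space.indep_vars M (\<lambda>_. borel) X UNIV"
    and X_ident: "\<And>k. distr M borel (X k) = distr M borel (X 0)"
    and a: "\<And>m i. i < n \<Longrightarrow> cmod (a m i) < 1"
    and sums: "\<And>m. (\<lambda>k. (cmod (\<Sum>i<n. e m i * a m i ^ k))\<^sup>2) sums K"
    and small: "(\<lambda>m. \<Sum>i<n. cmod (e m i)) \<longlonglongrightarrow> 0"
  shows "(\<lambda>m. char (distr M borel (\<lambda>\<omega>. Re (\<Sum>i<n. e m i * rps (\<lambda>k. X k \<omega>) (a m i)))) t)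
    \<longlonglongrightarrow> complex_of_real (exp (- (t\<^sup>2 * K / 4)))"
proof -
  interpret proper_standard_variable M "X 0" by (rule X0)
  define \<epsilon> where "\<epsilon> m = (\<Sum>i<n. cmod (e m i))" for m
  define G where "G m = expectation (\<lambda>\<omega>. min (6 * (cmod (X 0 \<omega>))\<^sup>2) (\<bar>t\<bar> * \<epsilon> m * (cmod (X 0 \<omega>)) ^ 3))" for m
  define bound where "bound m = K * (t\<^sup>2 / 6 * G m) + t\<^sup>2 * (\<epsilon> m)\<^sup>2 / 4 * (t\<^sup>2 * K / 4)" for m
  have \<epsilon>_nonneg: "0 \<le> \<epsilon> m" for m unfolding \<epsilon>_def by (simp add: sum_nonneg)
  have coeff_le: "cmod (\<Sum>i<n. e m i * a m i ^ k) \<le> \<epsilon> m" for m k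
    unfolding \<epsilon>_def using a
    by (intro order_trans[OF norm_sum] sum_mono)
      (simp add: norm_mult norm_power mult_left_le power_le_one less_imp_le)
  have "G \<longlonglongrightarrow> 0"
    unfolding G_def using small \<epsilon>_nonneg unfolding \<epsilon>_def[symmetric] by (rule expectation_min_tendsto_0)
  then have "bound \<longlonglongrightarrow> K * (t\<^sup>2 / 6 * 0) + t\<^sup>2 * 0\<^sup>2 / 4 * (t\<^sup>2 * K / 4)"
    unfolding bound_def using small unfolding \<epsilon>_def[symmetric] by (intro tendsto_intros) simp_all
  then have bound_lim: "bound \<longlonglongrightarrow> 0" by simp
  have "(\<lambda>m. t\<^sup>2 * (\<epsilon> m)\<^sup>2 / 4) \<longlonglongrightarrow> t\<^sup>2 * 0\<^sup>2 / 4"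
    using small unfolding \<epsilon>_def[symmetric] by (intro tendsto_intros) simp_all
  then have "\<forall>\<^sub>F m in sequentially. t\<^sup>2 * (\<epsilon> m)\<^sup>2 / 4 < 1" by (rule order_tendstoD) simp
  then have "\<forall>\<^sub>F m in sequentially.
      cmod (char (distr M borel (\<lambda>\<omega>. Re (\<Sum>i<n. e m i * rps (\<lambda>k. X k \<omega>) (a m i)))) t
        - complex_of_real (exp (- (t\<^sup>2 * K / 4)))) \<le> bound m"
  proof eventually_elim
    case (elim m)
    have "(\<lambda>N. \<Prod>k<N. char (distr M borel (\<lambda>\<omega>. Re ((\<Sum>i<n. e m i * a m i ^ k) * X 0 \<omega>))) t)
        \<longlonglongrightarrow> char (distr M borel (\<lambda>\<omega>. Re (\<Sum>i<n. e m i * rps (\<lambda>k. X k \<omega>) (a m i)))) t"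
      using prob_space_axioms X_meas X_indep X_ident integrable_norm a by (rule char_Re_sum_rps_LIMSEQ_prod)
    then show ?case
      unfolding bound_def G_def using elim
      by (intro norm_lim_prod_char_sub_exp_le[OF coeff_le _ sums]) simp_all
  qed
  then show ?thesis
    by (intro Lim_null_comparison[OF _ bound_lim, THEN LIM_zero_cancel])
qed

lemma sums_norm_sum_divide_Delta_Phi_powers_sq:
  fixes n :: nat and z lam :: "nat \<Rightarrow> complex"
  assumes u: "cmod u < 1" and z: "\<And>i. i < n \<Longrightarrow> cmod (z i) < 1"
  shows "(\<lambda>k. (cmod (\<Sum>i<n. lam i / Delta u (z i) * Phi u (z i) ^ k))\<^sup>2) sums
    Re (\<Sum>i<n. \<Sum>j<n. lam i * cnj (lam j) / (1 - z i * cnj (z j)))"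
proof -
  have "(\<lambda>k. (cmod (\<Sum>i<n. lam i / Delta u (z i) * Phi u (z i) ^ k))\<^sup>2) sums
      Re (\<Sum>i<n. \<Sum>j<n. lam i / Delta u (z i) * cnj (lam j / Delta u (z j)) / (1 - Phi u (z i) * cnj (Phi u (z j))))"
    by (rule sums_norm_sum_powers_sq, rule norm_Phi_less_one[OF u z])
  also have "(\<Sum>i<n. \<Sum>j<n. lam i / Delta u (z i) * cnj (lam j / Delta u (z j)) / (1 - Phi u (z i) * cnj (Phi u (z j))))
      = (\<Sum>i<n. \<Sum>j<n. lam i * cnj (lam j) / (1 - z i * cnj (z j)))"
    using u z by (intro sum.cong refl kernel_divide_Delta_Phi) simp_all
  finally show ?thesis .
qed

theorem lemma3:
  fixes M :: "'a measure" and N :: "'b measure"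
    and X :: "nat \<Rightarrow> 'a \<Rightarrow> complex" and Y :: "nat \<Rightarrow> 'b \<Rightarrow> complex"
  assumes M: "prob_space M" and N: "prob_space N"
    and X_meas: "\<And>k. X k \<in> borel_measurable M"
    and X_indep: "prob_space.indep_vars M (\<lambda>_. borel) X UNIV"
    and X_ident: "\<And>k. distr M borel (X k) = distr M borel (X 0)"
    and X_sq_int: "integrable M (\<lambda>\<omega>. (cmod (X 0 \<omega>))\<^sup>2)"
    and X_mean: "prob_space.expectation M (X 0) = 0"
    and X_var: "prob_space.expectation M (\<lambda>\<omega>. (cmod (X 0 \<omega>))\<^sup>2) = 1"
    and X_ReIm: "prob_space.expectation M (\<lambda>\<omega>. (Re (X 0 \<omega>))\<^sup>2)
                 = prob_space.expectation M (\<lambda>\<omega>. (Im (X 0 \<omega>))\<^sup>2)"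
    and X_cov: "prob_space.expectation M (\<lambda>\<omega>. Re (X 0 \<omega>) * Im (X 0 \<omega>)) = 0"
    and Y_indep: "prob_space.indep_vars N (\<lambda>_. borel) Y UNIV"
    and Y_gauss: "\<And>k. distributed N lborel (Y k) (\<lambda>y. ennreal (exp (- (cmod y)\<^sup>2) / pi))"
  shows "\<forall>(n::nat) (z::nat \<Rightarrow> complex) (lam::nat \<Rightarrow> complex).
           (\<forall>i<n. cmod (z i) < 1) \<longrightarrow>
           (\<forall>u::nat \<Rightarrow> complex. (\<forall>m. cmod (u m) < 1) \<longrightarrow> (\<lambda>m. cmod (u m)) \<longlonglongrightarrow> 1 \<longrightarrow>
              weak_conv_m
                (\<lambda>m. distr M borel (\<lambda>\<omega>. Re (\<Sum>i<n. lam i *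
                        rps (\<lambda>k. X k \<omega>) (Phi (u m) (z i)) / Delta (u m) (z i))))
                (distr N borel (\<lambda>\<omega>. Re (\<Sum>i<n. lam i * rps (\<lambda>k. Y k \<omega>) (z i)))))"
proof (intro allI impI)
  fix n :: nat and z lam u :: "nat \<Rightarrow> complex"
  assume "\<forall>i<n. cmod (z i) < 1" and "\<forall>m. cmod (u m) < 1" and u_lim: "(\<lambda>m. cmod (u m)) \<longlonglongrightarrow> 1"
  then have z: "\<And>i. i < n \<Longrightarrow> cmod (z i) < 1" and u: "\<And>m. cmod (u m) < 1" by simp_all
  define K where "K = Re (\<Sum>i<n. \<Sum>j<n. lam i * cnj (lam j) / (1 - z i * cnj (z j)))"
  have X0: "proper_standard_variable M (X 0)"
    using M X_meas X_sq_int X_mean X_var X_ReIm X_cov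
    by (simp add: proper_standard_variable_def proper_standard_variable_axioms_def)
  have "(\<lambda>k. (cmod (\<Sum>i<n. lam i / Delta (u m) (z i) * Phi (u m) (z i) ^ k))\<^sup>2) sums K" for m
    unfolding K_def using u z by (rule sums_norm_sum_divide_Delta_Phi_powers_sq)
  moreover have "(\<lambda>m. \<Sum>i<n. cmod (lam i / Delta (u m) (z i))) \<longlonglongrightarrow> 0"
    using z u u_lim by (rule sum_norm_divide_Delta_tendsto_0)
  ultimately have "(\<lambda>m. char (distr M borel (\<lambda>\<omega>. Re (\<Sum>i<n. lam i / Delta (u m) (z i) *
        rps (\<lambda>k. X k \<omega>) (Phi (u m) (z i))))) t) \<longlonglongrightarrow> complex_of_real (exp (- (t\<^sup>2 * K / 4)))" for t
    using X0 X_meas X_indep X_ident norm_Phi_less_one[OF u z]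
    by (intro char_Re_sum_rps_tendsto_gaussian) blast+
  moreover have "char (distr N borel (\<lambda>\<omega>. Re (\<Sum>i<n. lam i * rps (\<lambda>k. Y k \<omega>) (z i)))) t =
      complex_of_real (exp (- (t\<^sup>2 * K / 4)))" for t
    unfolding K_def using N Y_indep Y_gauss z by (rule char_Re_sum_rps_complex_gaussian)
  ultimately have "weak_conv_m
      (\<lambda>m. distr M borel (\<lambda>\<omega>. Re (\<Sum>i<n. lam i / Delta (u m) (z i) * rps (\<lambda>k. X k \<omega>) (Phi (u m) (z i)))))
      (distr N borel (\<lambda>\<omega>. Re (\<Sum>i<n. lam i * rps (\<lambda>k. Y k \<omega>) (z i))))"
    using X_meas borel_measurable_complex_gaussian[OF N Y_gauss]
    by (intro levy_continuity prob_space.real_distribution_distr[OF M] prob_space.real_distribution_distr[OF N]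
        borel_measurable_Re_sum_rps) simp_all
  then show "weak_conv_m
      (\<lambda>m. distr M borel (\<lambda>\<omega>. Re (\<Sum>i<n. lam i * rps (\<lambda>k. X k \<omega>) (Phi (u m) (z i)) / Delta (u m) (z i))))
      (distr N borel (\<lambda>\<omega>. Re (\<Sum>i<n. lam i * rps (\<lambda>k. Y k \<omega>) (z i))))"
    by (simp add: mult.commute)
qed

end
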